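(* Let $L$ be an algebraic frame, $X_L$ its Priestley space, and $Y_L$ the spatial part of $X_L$. The following are equivalent: (1) $L$ is an arithmetic frame; (2) $X_L$ is an arithmetic L-space; (3) $Y_L$ is a stably compactly based space.
   Context: A frame is a complete lattice satisfying $a\wedge\bigvee S=\bigvee\{a\wedge s\mid s\in S\}$. In a frame $L$, $a\ll b$ means whenever $b\le\bigvee S$ there is finite $T\subseteq S$ with $a\le\bigvee T$; $a$ is compact if $a\ll a$; $K(L)$ is the set of compact elements. $L$ is algebraic if $a=\bigvee\{b\in K(L)\mid b\le a\}$ for all $a$, and arithmetic if it is algebraic and $\ll$ is stable ($a\ll b$ and $a\ll c$ imply $a\ll b\wedge c$); equivalently, an algebraic frame in which the meet of two compact elements is compact. A Priestley space is a Stone space $X$ with a partial order such that clopen upsets separate points. An L-space is a Priestley space in which the downset of each clopen set is clopen and the closure of each open upset is open. ${\sf ClopUp}(X)$ is the set of clopen upsets; $\mathrm{cl}$ denotes closure. The Priestley space $X_L$ is the set of prime filters of $L$ ordered by inclusion with topology generated by the sets $\varphi(a)=\{x\mid a\in x\}$ and their complements. The spatial part of $X$ is $Y=\{y\in X\mid{\downarrow}y\text{ clopen}\}$, topologized by declaring $V\subseteq Y$ open iff $V=U\cap Y$ for some $U\in{\sf ClopUp}(X)$. A Scott upset is a closed upset $F$ with $\min F\subseteq Y$; ${\sf ClopSUp}(X)$ is the set of clopen Scott upsets. For $U,V\in{\sf ClopUp}(X)$, $V\ll U$ means that for every open upset $W$, $U\subseteq\mathrm{cl}\,W$ implies $V\subseteq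 W$; $\ker U=\bigcup\{V\in{\sf ClopUp}(X)\mid V\ll U\}$; $\mathrm{core}\,U=\bigcup\{V\in{\sf ClopSUp}(X)\mid V\subseteq U\}$. An algebraic L-space is one where $\mathrm{core}\,U$ is dense in $U$ for each $U\in{\sf ClopUp}(X)$; an arithmetic L-space is an algebraic L-space with $\ker(U\cap V)=\ker U\cap\ker V$ for all $U,V\in{\sf ClopUp}(X)$. A topological space is stably compactly based if it is sober, has a basis of compact open sets, and the intersection of any two compact open sets is compact. *)

theory Defs
  imports "HOL-Analysis.Analysis"
begin

definition is_frame :: "'a::complete_lattice itself \<Rightarrow> bool" where
  "is_frame _ \<longleftrightarrow> (\<forall>(a::'a) S. inf a (Sup S) = Sup ((\<lambda>s. inf a s) ` S))"

definition way_below :: "'a::complete_lattice \<Rightarrow> 'a \<Rightarrow> bool" where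
  "way_below a b \<longleftrightarrow> (\<forall>S. b \<le> Sup S \<longrightarrow> (\<exists>T. T \<subseteq> S \<and> finite T \<and> a \<le> Sup T))"

definition compact_el :: "'a::complete_lattice \<Rightarrow> bool" where
  "compact_el a \<longleftrightarrow> way_below a a"

definition algebraic_frame :: "'a::complete_lattice itself \<Rightarrow> bool" where
  "algebraic_frame t \<longleftrightarrow> is_frame t \<and>
     (\<forall>a::'a. a = Sup {b. compact_el b \<and> b \<le> a})"

definition arithmetic_frame :: "'a::complete_lattice itself \<Rightarrow> bool" where
  "arithmetic_frame t \<longleftrightarrow> algebraic_frame t \<and>
     (\<forall>a b c::'a. way_below a b \<and> way_below a c \<longrightarrow> way_below a (inf b c))"

definition prime_filter :: "'a::complete_lattice set \<Rightarrow> bool" where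
  "prime_filter F \<longleftrightarrow> top \<in> F \<and> bot \<notin> F \<and>
     (\<forall>a b. a \<in> F \<longrightarrow> a \<le> b \<longrightarrow> b \<in> F) \<and>
     (\<forall>a b. a \<in> F \<longrightarrow> b \<in> F \<longrightarrow> inf a b \<in> F) \<and>
     (\<forall>a b. sup a b \<in> F \<longrightarrow> a \<in> F \<or> b \<in> F)"

definition prime_filters :: "'a::complete_lattice itself \<Rightarrow> 'a set set" where
  "prime_filters _ = {F. prime_filter F}"

definition phi :: "'a::complete_lattice \<Rightarrow> 'a set set" where
  "phi a = {x. prime_filter x \<and> a \<in> x}"

definition XL :: "'a::complete_lattice itself \<Rightarrow> 'a set topology" where
  "XL t = topology_generated_by
     ((\<lambda>a. phi a) ` UNIV \<union> (\<lambda>a. prime_filters t - phi a) ` UNIV)"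

definition upset_in :: "'x topology \<Rightarrow> ('x \<Rightarrow> 'x \<Rightarrow> bool) \<Rightarrow> 'x set \<Rightarrow> bool" where
  "upset_in X le U \<longleftrightarrow> U \<subseteq> topspace X \<and>
     (\<forall>x\<in>U. \<forall>y\<in>topspace X. le x y \<longrightarrow> y \<in> U)"

definition down_of :: "'x topology \<Rightarrow> ('x \<Rightarrow> 'x \<Rightarrow> bool) \<Rightarrow> 'x set \<Rightarrow> 'x set" where
  "down_of X le A = {y \<in> topspace X. \<exists>x\<in>A. le y x}"

definition clopenin :: "'x topology \<Rightarrow> 'x set \<Rightarrow> bool" where
  "clopenin X U \<longleftrightarrow> openin X U \<and> closedin X U"

definition ClopUp :: "'x topology \<Rightarrow> ('x \<Rightarrow> 'x \<Rightarrow> bool) \<Rightarrow> 'x set set" where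
  "ClopUp X le = {U. clopenin X U \<and> upset_in X le U}"

definition stone_space :: "'x topology \<Rightarrow> bool" where
  "stone_space X \<longleftrightarrow> compact_space X \<and> Hausdorff_space X \<and>
     (\<forall>U x. openin X U \<and> x \<in> U \<longrightarrow> (\<exists>V. clopenin X V \<and> x \<in> V \<and> V \<subseteq> U))"

definition partial_order_on_space :: "'x topology \<Rightarrow> ('x \<Rightarrow> 'x \<Rightarrow> bool) \<Rightarrow> bool" where
  "partial_order_on_space X le \<longleftrightarrow>
     (\<forall>x\<in>topspace X. le x x) \<and>
     (\<forall>x\<in>topspace X. \<forall>y\<in>topspace X. le x y \<and> le y x \<longrightarrow> x = y) \<and>
     (\<forall>x\<in>topspace X. \<forall>y\<in>topspace X. \<forall>z\<in>topspace X. le x y \<and> le y z \<longrightarrow> le x z)"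

definition priestley_space :: "'x topology \<Rightarrow> ('x \<Rightarrow> 'x \<Rightarrow> bool) \<Rightarrow> bool" where
  "priestley_space X le \<longleftrightarrow> stone_space X \<and> partial_order_on_space X le \<and>
     (\<forall>x\<in>topspace X. \<forall>y\<in>topspace X. \<not> le x y \<longrightarrow>
        (\<exists>U\<in>ClopUp X le. x \<in> U \<and> y \<notin> U))"

definition L_space :: "'x topology \<Rightarrow> ('x \<Rightarrow> 'x \<Rightarrow> bool) \<Rightarrow> bool" where
  "L_space X le \<longleftrightarrow> priestley_space X le \<and>
     (\<forall>U. clopenin X U \<longrightarrow> clopenin X (down_of X le U)) \<and>
     (\<forall>U. openin X U \<and> upset_in X le U \<longrightarrow> openin X (X closure_of U))"

definition spatial_part :: "'x topology \<Rightarrow> ('x \<Rightarrow> 'x \<Rightarrow> bool) \<Rightarrow> 'x set" where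
  "spatial_part X le = {y \<in> topspace X. clopenin X (down_of X le {y})}"

definition spatial_topology :: "'x topology \<Rightarrow> ('x \<Rightarrow> 'x \<Rightarrow> bool) \<Rightarrow> 'x topology" where
  "spatial_topology X le =
     topology (\<lambda>V. \<exists>U\<in>ClopUp X le. V = U \<inter> spatial_part X le)"

definition min_of :: "('x \<Rightarrow> 'x \<Rightarrow> bool) \<Rightarrow> 'x set \<Rightarrow> 'x set" where
  "min_of le F = {x \<in> F. \<forall>y\<in>F. le y x \<longrightarrow> y = x}"

definition scott_upset :: "'x topology \<Rightarrow> ('x \<Rightarrow> 'x \<Rightarrow> bool) \<Rightarrow> 'x set \<Rightarrow> bool" where
  "scott_upset X le F \<longleftrightarrow> closedin X F \<and> upset_in X le F \<and>
     min_of le F \<subseteq> spatial_part X le"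

definition ClopSUp :: "'x topology \<Rightarrow> ('x \<Rightarrow> 'x \<Rightarrow> bool) \<Rightarrow> 'x set set" where
  "ClopSUp X le = {U \<in> ClopUp X le. scott_upset X le U}"

definition way_below_sp :: "'x topology \<Rightarrow> ('x \<Rightarrow> 'x \<Rightarrow> bool) \<Rightarrow> 'x set \<Rightarrow> 'x set \<Rightarrow> bool" where
  "way_below_sp X le V U \<longleftrightarrow>
     (\<forall>W. openin X W \<and> upset_in X le W \<longrightarrow> U \<subseteq> X closure_of W \<longrightarrow> V \<subseteq> W)"

definition ker_sp :: "'x topology \<Rightarrow> ('x \<Rightarrow> 'x \<Rightarrow> bool) \<Rightarrow> 'x set \<Rightarrow> 'x set" where
  "ker_sp X le U = \<Union>{V \<in> ClopUp X le. way_below_sp X le V U}"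

definition core_sp :: "'x topology \<Rightarrow> ('x \<Rightarrow> 'x \<Rightarrow> bool) \<Rightarrow> 'x set \<Rightarrow> 'x set" where
  "core_sp X le U = \<Union>{V \<in> ClopSUp X le. V \<subseteq> U}"

definition algebraic_L_space :: "'x topology \<Rightarrow> ('x \<Rightarrow> 'x \<Rightarrow> bool) \<Rightarrow> bool" where
  "algebraic_L_space X le \<longleftrightarrow> L_space X le \<and>
     (\<forall>U\<in>ClopUp X le. U \<subseteq> X closure_of (core_sp X le U))"

definition arithmetic_L_space :: "'x topology \<Rightarrow> ('x \<Rightarrow> 'x \<Rightarrow> bool) \<Rightarrow> bool" where
  "arithmetic_L_space X le \<longleftrightarrow> algebraic_L_space X le \<and>
     (\<forall>U\<in>ClopUp X le. \<forall>V\<in>ClopUp X le. ker_sp X le (U \<inter> V) = ker_sp X le U \<inter> ker_sp X le V)"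

definition irreducible_closed :: "'x topology \<Rightarrow> 'x set \<Rightarrow> bool" where
  "irreducible_closed X C \<longleftrightarrow> closedin X C \<and> C \<noteq> {} \<and>
     (\<forall>A B. closedin X A \<and> closedin X B \<and> C \<subseteq> A \<union> B \<longrightarrow> C \<subseteq> A \<or> C \<subseteq> B)"

definition sober_space :: "'x topology \<Rightarrow> bool" where
  "sober_space X \<longleftrightarrow> (\<forall>C. irreducible_closed X C \<longrightarrow>
     (\<exists>!x. x \<in> topspace X \<and> C = X closure_of {x}))"

definition stably_compactly_based :: "'x topology \<Rightarrow> bool" where
  "stably_compactly_based X \<longleftrightarrow> sober_space X \<and>
     (\<forall>U x. openin X U \<and> x \<in> U \<longrightarrow>
        (\<exists>V. openin X V \<and> compactin X V \<and> x \<in> V \<and> V \<subseteq> U)) \<and>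
     (\<forall>U V. openin X U \<and> compactin X U \<and> openin X V \<and> compactin X V \<longrightarrow>
        compactin X (U \<inter> V))"

end

(*
  Everything is transported along phi a = {x. a \<in> x}. By the prime filter theorem phi is an
  order embedding of L into the clopen upsets of X_L, and by compactness of X_L (Alexander subbase
  theorem) it is onto. Closures of open upsets are computed by joins, so the way-below relation
  between clopen upsets is exactly the way-below relation of L, ker (phi a) is the union of the
  phi c with c way below a, and the kernel condition of an arithmetic L-space is stability of the
  way-below relation. For a compact k, a maximal ideal avoiding k is principal, so minimal points
  of phi k are spatial; this gives algebraicity of X_L. The spatial part consists of the prime
  filters with principal complement (the points of L), its opens are the traces of the phi a, and
  for algebraic L its compact opens are the traces of phi k with k compact. So it is stably
  compactly based iff compact elements are closed under binary meets, which for algebraic L is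
  again stability of the way-below relation.
*)

theory Submission
  imports Defs
begin

section \<open>Filters, ideals and prime filters\<close>

definition lattice_filter :: "'a::complete_lattice set \<Rightarrow> bool" where
  "lattice_filter F \<longleftrightarrow>
     top \<in> F \<and> (\<forall>a\<in>F. \<forall>b. a \<le> b \<longrightarrow> b \<in> F) \<and> (\<forall>a\<in>F. \<forall>b\<in>F. inf a b \<in> F)"

definition lattice_ideal :: "'a::complete_lattice set \<Rightarrow> bool" where
  "lattice_ideal I \<longleftrightarrow>
     bot \<in> I \<and> (\<forall>a\<in>I. \<forall>b. b \<le> a \<longrightarrow> b \<in> I) \<and> (\<forall>a\<in>I. \<forall>b\<in>I. sup a b \<in> I)"

lemma lattice_filter_principal: "lattice_filter {z. a \<le> z}"
  unfolding lattice_filter_def by (simp add: order.trans[of a])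

lemma lattice_ideal_principal: "lattice_ideal {z. z \<le> a}"
  unfolding lattice_ideal_def by (simp add: order.trans[of _ _ a])

lemma lattice_ideal_Sup_finite:
  assumes "lattice_ideal I" "finite T" "T \<subseteq> I"
  shows "Sup T \<in> I"
proof -
  have "bot \<in> I" "\<And>a b. a \<in> I \<Longrightarrow> b \<in> I \<Longrightarrow> sup a b \<in> I"
    using assms(1) unfolding lattice_ideal_def by blast+
  with assms(2,3) show ?thesis by induction simp_all
qed

lemma lattice_ideal_Union_chain:
  assumes "C \<noteq> {}" "\<And>J. J \<in> C \<Longrightarrow> lattice_ideal J"
    and chain: "\<And>J J'. J \<in> C \<Longrightarrow> J' \<in> C \<Longrightarrow> J \<subseteq> J' \<or> J' \<subseteq> J"
  shows "lattice_ideal (\<Union>C)"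
  unfolding lattice_ideal_def
proof (intro conjI ballI allI impI)
  show "bot \<in> \<Union>C" using assms(1,2) by (auto simp: lattice_ideal_def)
next
  fix a b assume "a \<in> \<Union>C" "b \<le> a"
  then show "b \<in> \<Union>C" using assms(2) by (auto simp: lattice_ideal_def)
next
  fix a b assume "a \<in> \<Union>C" "b \<in> \<Union>C"
  then obtain J J' where "J \<in> C" "J' \<in> C" "a \<in> J" "b \<in> J'" by blast
  then obtain K where "K \<in> C" "a \<in> K" "b \<in> K" using chain by blast
  then have "sup a b \<in> K" using assms(2) unfolding lattice_ideal_def by blast
  then show "sup a b \<in> \<Union>C" using \<open>K \<in> C\<close> by blast
qed

lemma inf_Inf_Diff_le: "inf a (Inf (B - {a})) \<le> Inf (B::'a::complete_lattice set)"
proof -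
  have "inf a (Inf (B - {a})) = Inf (insert a (B - {a}))"
    by (rule complete_lattice_class.Inf_insert[symmetric])
  also have "\<dots> \<le> Inf B" by (rule Inf_superset_mono) blast
  finally show ?thesis .
qed

lemma lattice_ideal_adjoin:
  assumes J: "lattice_ideal J"
  shows "lattice_ideal {z. \<exists>j\<in>J. z \<le> sup j x}" (is "lattice_ideal ?K")
  unfolding lattice_ideal_def
proof (intro conjI ballI allI impI)
  show "bot \<in> ?K" using J unfolding lattice_ideal_def by auto
next
  fix a b assume "a \<in> ?K" "b \<le> a"
  then show "b \<in> ?K" using order_trans by blast
next
  fix a b assume "a \<in> ?K" "b \<in> ?K"
  then obtain j j' where "j \<in> J" "j' \<in> J" "a \<le> sup j x" "b \<le> sup j' x" by blast
  moreover then have "sup j j' \<in> J" using J unfolding lattice_ideal_def by blast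
  ultimately show "sup a b \<in> ?K"
    by (intro CollectI bexI[of _ "sup j j'"]) (meson le_supI sup.mono sup_ge1 sup_ge2 order_refl order_trans)
qed

lemma lattice_filter_generated:
  "lattice_filter {z. \<exists>B0. finite B0 \<and> B0 \<subseteq> B \<and> Inf B0 \<le> z}" (is "lattice_filter ?F")
  unfolding lattice_filter_def
proof (intro conjI ballI allI impI)
  show "top \<in> ?F" by (intro CollectI exI[of _ "{}"]) simp
next
  fix a b assume "a \<in> ?F" "a \<le> b"
  then show "b \<in> ?F" using order_trans by blast
next
  fix a b assume "a \<in> ?F" "b \<in> ?F"
  then obtain B1 B2 where "finite B1" "B1 \<subseteq> B" "Inf B1 \<le> a" "finite B2" "B2 \<subseteq> B" "Inf B2 \<le> b"
    by blast
  then show "inf a b \<in> ?F"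
    by (intro CollectI exI[of _ "B1 \<union> B2"]) (simp add: Inf_union_distrib le_infI1 le_infI2)
qed

lemma lattice_ideal_generated:
  "lattice_ideal {z. \<exists>A0. finite A0 \<and> A0 \<subseteq> A \<and> z \<le> Sup A0}" (is "lattice_ideal ?I")
  unfolding lattice_ideal_def
proof (intro conjI ballI allI impI)
  show "bot \<in> ?I" by (intro CollectI exI[of _ "{}"]) simp
next
  fix a b assume "a \<in> ?I" "b \<le> a"
  then show "b \<in> ?I" using order_trans by blast
next
  fix a b assume "a \<in> ?I" "b \<in> ?I"
  then obtain A1 A2 where "finite A1" "A1 \<subseteq> A" "a \<le> Sup A1" "finite A2" "A2 \<subseteq> A" "b \<le> Sup A2"
    by blast
  then show "sup a b \<in> ?I"
    by (intro CollectI exI[of _ "A1 \<union> A2"]) (simp add: Sup_union_distrib le_supI1 le_supI2)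
qed

lemma maximal_disjoint_ideal_exists:
  assumes "lattice_ideal I" "F \<inter> I = {}"
  shows "\<exists>J. lattice_ideal J \<and> I \<subseteq> J \<and> F \<inter> J = {} \<and>
           (\<forall>J'. lattice_ideal J' \<and> J \<subseteq> J' \<and> F \<inter> J' = {} \<longrightarrow> J' = J)"
proof -
  let ?A = "{J. lattice_ideal J \<and> I \<subseteq> J \<and> F \<inter> J = {}}"
  have "\<exists>J\<in>?A. \<forall>J'\<in>?A. J \<subseteq> J' \<longrightarrow> J' = J"
  proof (rule subset_Zorn_nonempty)
    show "?A \<noteq> {}" using assms by blast
  next
    fix C assume C: "C \<noteq> {}" "subset.chain ?A C"
    then have sub: "C \<subseteq> ?A" and "\<forall>J\<in>C. \<forall>J'\<in>C. J \<subseteq> J' \<or> J' \<subseteq> J"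
      by (simp_all add: subset_chain_def)
    then have "lattice_ideal (\<Union>C)" using C(1) by (intro lattice_ideal_Union_chain) auto
    then show "\<Union>C \<in> ?A" using C(1) sub by blast
  qed
  then obtain J where J: "J \<in> ?A" and max: "\<forall>J'\<in>?A. J \<subseteq> J' \<longrightarrow> J' = J"
    by (rule bexE)
  show ?thesis
  proof (intro exI conjI allI impI)
    show "lattice_ideal J" "I \<subseteq> J" "F \<inter> J = {}" using J by simp_all
  next
    fix J' assume J': "lattice_ideal J' \<and> J \<subseteq> J' \<and> F \<inter> J' = {}"
    then have "J' \<in> ?A" using J by auto
    then show "J' = J" using max J' by blast
  qed
qed

lemma maximal_disjoint_ideal_adjoin:
  assumes J: "lattice_ideal J"
    and max: "\<forall>J'. lattice_ideal J' \<and> J \<subseteq> J' \<and> F \<inter> J' = {} \<longrightarrow> J' = J"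
    and "x \<notin> J"
  shows "\<exists>j\<in>J. \<exists>f\<in>F. f \<le> sup j x"
proof (rule ccontr)
  let ?K = "{z. \<exists>j\<in>J. z \<le> sup j x}"
  assume "\<not> ?thesis"
  moreover have "lattice_ideal ?K" by (rule lattice_ideal_adjoin[OF J])
  moreover have "J \<subseteq> ?K" by (auto intro: sup.coboundedI1)
  ultimately have "?K = J" using max by blast
  moreover have "x \<in> ?K" using J unfolding lattice_ideal_def by auto
  ultimately show False using \<open>x \<notin> J\<close> by blast
qed

lemma prime_filter_top: "prime_filter x \<Longrightarrow> top \<in> x"
  unfolding prime_filter_def by blast

lemma prime_filter_bot: "prime_filter x \<Longrightarrow> bot \<notin> x"
  unfolding prime_filter_def by blast

lemma prime_filter_up: "prime_filter x \<Longrightarrow> a \<in> x \<Longrightarrow> a \<le> b \<Longrightarrow> b \<in> x"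
  unfolding prime_filter_def by blast

lemma prime_filter_inf_iff: "prime_filter x \<Longrightarrow> inf a b \<in> x \<longleftrightarrow> a \<in> x \<and> b \<in> x"
  unfolding prime_filter_def by (meson inf.cobounded1 inf.cobounded2)

lemma prime_filter_sup_iff: "prime_filter x \<Longrightarrow> sup a b \<in> x \<longleftrightarrow> a \<in> x \<or> b \<in> x"
  unfolding prime_filter_def by (meson sup.cobounded1 sup.cobounded2)

lemma prime_filter_Inf_finite:
  assumes "prime_filter x" "finite B" "B \<subseteq> x"
  shows "Inf B \<in> x"
  using assms(2,3) by induction (auto simp: assms(1) prime_filter_top prime_filter_inf_iff)

lemma prime_filter_Sup_finite:
  assumes "prime_filter x" "finite A" "Sup A \<in> x"
  shows "\<exists>a\<in>A. a \<in> x"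
  using assms(2,3) by induction (auto simp: assms(1) prime_filter_bot prime_filter_sup_iff)

section \<open>The way-below relation\<close>

lemma way_below_mono:
  "a' \<le> a \<Longrightarrow> way_below a b \<Longrightarrow> b \<le> b' \<Longrightarrow> way_below (a'::'a::complete_lattice) b'"
  unfolding way_below_def by (meson order_trans)

lemma way_below_bot: "way_below (bot::'a::complete_lattice) b"
  unfolding way_below_def by (intro allI impI exI[of _ "{}"]) simp

lemma way_below_sup:
  assumes "way_below a c" "way_below b c"
  shows "way_below (sup a b :: 'a::complete_lattice) c"
  unfolding way_below_def
proof (intro allI impI)
  fix S assume "c \<le> Sup S"
  then obtain T1 T2 where "T1 \<subseteq> S" "finite T1" "a \<le> Sup T1" "T2 \<subseteq> S" "finite T2" "b \<le> Sup T2"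
    using assms unfolding way_below_def by meson
  then show "\<exists>T\<subseteq>S. finite T \<and> sup a b \<le> Sup T"
    by (intro exI[of _ "T1 \<union> T2"]) (simp add: Sup_union_distrib le_supI1 le_supI2)
qed

lemma way_below_Sup_finite:
  "finite D \<Longrightarrow> (\<And>d. d \<in> D \<Longrightarrow> way_below d c) \<Longrightarrow> way_below (Sup D) (c::'a::complete_lattice)"
  by (induction D rule: finite_induct) (simp_all add: way_below_bot way_below_sup)

lemma compact_el_Sup_finite:
  assumes "finite K" "\<And>k. k \<in> K \<Longrightarrow> compact_el (k::'a::complete_lattice)"
  shows "compact_el (Sup K)"
  unfolding compact_el_def
proof (rule way_below_Sup_finite[OF assms(1)])
  fix k assume "k \<in> K"
  then show "way_below k (Sup K)"
    using assms(2) unfolding compact_el_def by (meson Sup_upper order_refl way_below_mono)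
qed

lemma compact_el_witness:
  assumes algebraic: "\<And>x::'a::complete_lattice. x = Sup {k. compact_el k \<and> k \<le> x}"
    and "\<not> a \<le> (b::'a)"
  obtains k where "compact_el k" "k \<le> a" "\<not> k \<le> b"
proof -
  have "\<exists>k. compact_el k \<and> k \<le> a \<and> \<not> k \<le> b"
  proof (rule ccontr)
    assume "\<nexists>k. compact_el k \<and> k \<le> a \<and> \<not> k \<le> b"
    then have "Sup {k. compact_el k \<and> k \<le> a} \<le> b" by (intro Sup_least) blast
    then show False using assms(2) algebraic[of a] by simp
  qed
  then show thesis using that by blast
qed

lemma compact_el_between:
  assumes algebraic: "\<And>x::'a::complete_lattice. x = Sup {k. compact_el k \<and> k \<le> x}"
    and "way_below a (b::'a)"
  obtains k where "compact_el k" "a \<le> k" "k \<le> b"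
proof -
  have "b \<le> Sup {k. compact_el k \<and> k \<le> b}" using algebraic[of b] by simp
  then obtain T where T: "T \<subseteq> {k. compact_el k \<and> k \<le> b}" "finite T" "a \<le> Sup T"
    using assms(2) unfolding way_below_def by blast
  then have "compact_el (Sup T)" "Sup T \<le> b" by (auto intro: compact_el_Sup_finite Sup_least)
  then show thesis using that T(3) by blast
qed

lemma stable_way_below_iff_compact_inf:
  assumes algebraic: "\<And>x::'a::complete_lattice. x = Sup {k. compact_el k \<and> k \<le> x}"
  shows "(\<forall>a b c::'a. way_below a b \<and> way_below a c \<longrightarrow> way_below a (inf b c))
     \<longleftrightarrow> (\<forall>k k'::'a. compact_el k \<and> compact_el k' \<longrightarrow> compact_el (inf k k'))"
proof (intro iffI allI impI)
  fix k k' :: 'a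
  assume stable: "\<forall>a b c::'a. way_below a b \<and> way_below a c \<longrightarrow> way_below a (inf b c)"
    and "compact_el k \<and> compact_el k'"
  then have "way_below (inf k k') k" "way_below (inf k k') k'"
    using way_below_mono[OF inf_le1 _ order_refl] way_below_mono[OF inf_le2 _ order_refl]
    unfolding compact_el_def by blast+
  then show "compact_el (inf k k')" unfolding compact_el_def using stable by blast
next
  fix a b c :: 'a
  assume compact_inf: "\<forall>k k'::'a. compact_el k \<and> compact_el k' \<longrightarrow> compact_el (inf k k')"
    and "way_below a b \<and> way_below a c"
  then obtain k k' where k: "compact_el k" "a \<le> k" "k \<le> b" and k': "compact_el k'" "a \<le> k'" "k' \<le> c"
    by (meson compact_el_between[OF algebraic])
  then have "way_below (inf k k') (inf k k')" using compact_inf unfolding compact_el_def by blast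
  moreover have "a \<le> inf k k'" "inf k k' \<le> inf b c" using k k' by (simp_all add: le_infI1 le_infI2)
  ultimately show "way_below a (inf b c)" using way_below_mono by blast
qed

definition heyting_imp :: "'a::complete_lattice \<Rightarrow> 'a \<Rightarrow> 'a" where
  "heyting_imp a b = Sup {c. inf c a \<le> b}"

locale frame_type =
  fixes t :: "'a::complete_lattice itself"
  assumes frame: "is_frame t"
begin

lemma inf_Sup_distrib: "inf (a::'a) (Sup S) = Sup ((\<lambda>s. inf a s) ` S)"
  using frame unfolding is_frame_def by blast

lemma inf_sup_distrib: "inf (a::'a) (sup b c) = sup (inf a b) (inf a c)"
  using inf_Sup_distrib[of a "{b, c}"] by simp

lemma sup_inf_distrib: "sup (a::'a) (inf b c) = inf (sup a b) (sup a c)"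
proof -
  have "inf (sup a b) (sup a c) = sup (inf (sup a b) a) (inf (sup a b) c)"
    by (rule inf_sup_distrib)
  also have "inf (sup a b) a = a" by (simp add: inf.absorb2)
  also have "inf (sup a b) c = sup (inf a c) (inf b c)"
    using inf_sup_distrib[of c a b] by (simp only: inf_commute)
  also have "sup a (sup (inf a c) (inf b c)) = sup a (inf b c)"
    by (simp only: sup_assoc[symmetric] sup_inf_absorb)
  finally show ?thesis by simp
qed

lemma le_heyting_imp_iff: "(c::'a) \<le> heyting_imp a b \<longleftrightarrow> inf c a \<le> b"
proof
  assume "c \<le> heyting_imp a b"
  then have "inf c a \<le> inf a (heyting_imp a b)" using inf_mono[of c _ a a] by (simp add: inf_commute)
  also have "\<dots> = Sup ((\<lambda>s. inf a s) ` {c. inf c a \<le> b})"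
    unfolding heyting_imp_def by (rule inf_Sup_distrib)
  also have "\<dots> \<le> b" by (rule SUP_least) (simp add: inf_commute)
  finally show "inf c a \<le> b" .
qed (simp add: heyting_imp_def Sup_upper)

lemma maximal_disjoint_ideal_prime:
  assumes F: "lattice_filter F" and J: "lattice_ideal J" "F \<inter> J = {}"
    and max: "\<forall>J'. lattice_ideal J' \<and> J \<subseteq> J' \<and> F \<inter> J' = {} \<longrightarrow> J' = J"
  shows "prime_filter (- (J::'a set))"
proof -
  note escape = maximal_disjoint_ideal_adjoin[OF J(1) max]
  have J_down: "a \<in> J \<Longrightarrow> b \<le> a \<Longrightarrow> b \<in> J"
    and J_sup: "a \<in> J \<Longrightarrow> b \<in> J \<Longrightarrow> sup a b \<in> J"
    and F_inf: "f \<in> F \<Longrightarrow> g \<in> F \<Longrightarrow> inf f g \<in> F" for a b f g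
    using J(1) F unfolding lattice_ideal_def lattice_filter_def by blast+
  show ?thesis
    unfolding prime_filter_def
  proof (intro conjI allI impI)
    show "top \<in> - J" using F J(2) unfolding lattice_filter_def by blast
    show "bot \<notin> - J" using J(1) unfolding lattice_ideal_def by blast
  next
    fix a b assume "a \<in> - J" "a \<le> b" then show "b \<in> - J" using J_down by blast
  next
    fix a b assume "sup a b \<in> - J" then show "a \<in> - J \<or> b \<in> - J" using J_sup by blast
  next
    fix a b assume "a \<in> - J" "b \<in> - J"
    then obtain j f j' f' where jf: "j \<in> J" "f \<in> F" "f \<le> sup j a" "j' \<in> J" "f' \<in> F" "f' \<le> sup j' b"
      using escape[of a] escape[of b] by auto
    show "inf a b \<in> - J"
    proof
      assume "inf a b \<in> J"
      have "inf f f' \<le> inf (sup (sup j j') a) (sup (sup j j') b)"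
        using jf by (meson inf_mono sup.mono sup_ge1 sup_ge2 order_refl order_trans)
      also have "\<dots> = sup (sup j j') (inf a b)" by (rule sup_inf_distrib[symmetric])
      finally have "inf f f' \<le> sup (sup j j') (inf a b)" .
      moreover have "sup (sup j j') (inf a b) \<in> J" using J_sup jf(1,4) \<open>inf a b \<in> J\<close> by blast
      ultimately have "inf f f' \<in> J" using J_down by blast
      then show False using F_inf jf J(2) by blast
    qed
  qed
qed

lemma prime_filter_separation:
  assumes "\<And>A0 B0. finite A0 \<Longrightarrow> A0 \<subseteq> A \<Longrightarrow> finite B0 \<Longrightarrow> B0 \<subseteq> B \<Longrightarrow>
      \<not> Inf B0 \<le> Sup A0"
  obtains x where "prime_filter x" "B \<subseteq> (x::'a set)" "x \<inter> A = {}"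
proof -
  let ?F = "{z. \<exists>B0. finite B0 \<and> B0 \<subseteq> B \<and> Inf B0 \<le> z}"
  let ?I = "{z. \<exists>A0. finite A0 \<and> A0 \<subseteq> A \<and> z \<le> Sup A0}"
  note F = lattice_filter_generated[of B] and I = lattice_ideal_generated[of A]
  have disj: "?F \<inter> ?I = {}" using assms order_trans by blast
  obtain J where J: "lattice_ideal J" "?I \<subseteq> J" "?F \<inter> J = {}"
    and max: "\<forall>J'. lattice_ideal J' \<and> J \<subseteq> J' \<and> ?F \<inter> J' = {} \<longrightarrow> J' = J"
    using maximal_disjoint_ideal_exists[OF I disj] by blast
  have "B \<subseteq> ?F"
  proof
    fix b assume "b \<in> B" then show "b \<in> ?F" by (intro CollectI exI[of _ "{b}"]) simp
  qed
  moreover have "A \<subseteq> ?I"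
  proof
    fix a assume "a \<in> A" then show "a \<in> ?I" by (intro CollectI exI[of _ "{a}"]) simp
  qed
  ultimately show thesis
    using that[OF maximal_disjoint_ideal_prime[OF F J(1,3) max]] J(2,3) by blast
qed

lemma prime_filter_separation_le:
  assumes "\<not> a \<le> (b::'a)"
  obtains x where "prime_filter x" "a \<in> x" "b \<notin> x"
proof (rule prime_filter_separation[of "{b}" "{a}"])
  fix A0 B0 :: "'a set" assume "A0 \<subseteq> {b}" "B0 \<subseteq> {a}"
  then have "a \<le> Inf B0" "Sup A0 \<le> b" by (auto intro: Inf_greatest Sup_least)
  then show "\<not> Inf B0 \<le> Sup A0" using assms order_trans by blast
next
  fix x assume "prime_filter x" "{a} \<subseteq> x" "x \<inter> {b} = {}"
  then show thesis using that by blast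
qed

lemma prime_element_separation:
  assumes k: "compact_el k" and "\<not> k \<le> b"
  obtains p where "b \<le> p" "\<not> k \<le> (p::'a)" "prime_filter {z. \<not> z \<le> p}"
proof -
  note F = lattice_filter_principal[of k] and I = lattice_ideal_principal[of b]
  have disj: "{z. k \<le> z} \<inter> {z. z \<le> b} = {}" using assms(2) order_trans by blast
  obtain J where J: "lattice_ideal J" "{z. z \<le> b} \<subseteq> J" "{z. k \<le> z} \<inter> J = {}"
    and max: "\<forall>J'. lattice_ideal J' \<and> J \<subseteq> J' \<and> {z. k \<le> z} \<inter> J' = {} \<longrightarrow> J' = J"
    using maximal_disjoint_ideal_exists[OF I disj] by blast
  \<comment> \<open>compactness of \<open>k\<close> makes the maximal ideal principal\<close>
  have kJ: "\<not> k \<le> Sup J"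
  proof
    assume "k \<le> Sup J"
    then obtain T where "T \<subseteq> J" "finite T" "k \<le> Sup T"
      using k unfolding compact_el_def way_below_def by blast
    then show False using lattice_ideal_Sup_finite[OF J(1)] J(3) by blast
  qed
  have "lattice_ideal {z. z \<le> Sup J}" by (rule lattice_ideal_principal)
  moreover have "J \<subseteq> {z. z \<le> Sup J}" by (auto intro: Sup_upper)
  moreover have "{z. k \<le> z} \<inter> {z. z \<le> Sup J} = {}" using kJ order_trans by blast
  ultimately have "{z. z \<le> Sup J} = J" using max by blast
  moreover have "prime_filter (- J)" by (rule maximal_disjoint_ideal_prime[OF F J(1,3) max])
  ultimately have "prime_filter {z. \<not> z \<le> Sup J}" by (simp add: Collect_neg_eq)
  moreover have "b \<le> Sup J" using J(2) by (auto intro: Sup_upper)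
  ultimately show thesis using that kJ by blast
qed

end

section \<open>The Priestley space of a frame\<close>

lemma mem_phi: "x \<in> phi a \<longleftrightarrow> prime_filter x \<and> a \<in> x"
  unfolding phi_def by blast

lemma mem_prime_filters: "x \<in> prime_filters t \<longleftrightarrow> prime_filter x"
  unfolding prime_filters_def by blast

lemma phi_subset_prime_filters: "phi a \<subseteq> prime_filters t"
  unfolding phi_def prime_filters_def by blast

lemma phi_inf: "phi (inf a b) = phi a \<inter> phi b"
  by (auto simp: mem_phi prime_filter_inf_iff)

lemma phi_sup: "phi (sup a b) = phi a \<union> phi b"
  by (auto simp: mem_phi prime_filter_sup_iff)

lemma phi_top: "phi (top::'a::complete_lattice) = prime_filters (t::'a itself)"
  by (auto simp: mem_phi mem_prime_filters prime_filter_top)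

lemma phi_bot: "phi bot = {}"
  by (auto simp: mem_phi prime_filter_bot)

lemma phi_mono: "a \<le> b \<Longrightarrow> phi a \<subseteq> phi b"
  by (auto simp: mem_phi intro: prime_filter_up)

lemma phi_Sup_finite:
  assumes "finite A"
  shows "phi (Sup A) = \<Union>(phi ` A)"
proof
  show "phi (Sup A) \<subseteq> \<Union>(phi ` A)"
    using prime_filter_Sup_finite[OF _ assms] by (auto simp: mem_phi)
  show "\<Union>(phi ` A) \<subseteq> phi (Sup A)"
    using phi_mono[OF Sup_upper] by blast
qed

abbreviation XL_subbasis :: "'a::complete_lattice itself \<Rightarrow> 'a set set set" where
  "XL_subbasis t \<equiv> range phi \<union> range (\<lambda>a. prime_filters t - phi a)"

lemma topspace_XL: "topspace (XL t) = prime_filters t"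
proof -
  have "\<Union>(XL_subbasis t) = prime_filters t"
  proof
    show "\<Union>(XL_subbasis t) \<subseteq> prime_filters t" using phi_subset_prime_filters by blast
    show "prime_filters t \<subseteq> \<Union>(XL_subbasis t)" by blast
  qed
  then show ?thesis unfolding XL_def by simp
qed

lemma openin_XL_phi: "openin (XL t) (phi a)"
  unfolding XL_def by (rule topology_generated_by_Basis) blast

lemma openin_XL_compl_phi: "openin (XL t) (prime_filters t - phi a)"
  unfolding XL_def by (rule topology_generated_by_Basis) blast

lemma closedin_XL_phi: "closedin (XL t) (phi a)"
  unfolding closedin_def topspace_XL using openin_XL_compl_phi phi_subset_prime_filters by blast

lemma clopenin_XL_phi: "clopenin (XL t) (phi a)"
  unfolding clopenin_def using openin_XL_phi closedin_XL_phi by blast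

lemma clopenin_XL_compl_phi: "clopenin (XL t) (prime_filters t - phi (a::'a::complete_lattice))"
proof -
  have "closedin (XL t) (topspace (XL t) - phi a)"
    by (rule closedin_diff[OF closedin_topspace openin_XL_phi])
  then show ?thesis unfolding clopenin_def topspace_XL using openin_XL_compl_phi by blast
qed

lemma clopenin_XL_phi_diff: "clopenin (XL t) (phi a - phi b)"
proof -
  have "phi a - phi b = phi a \<inter> (prime_filters t - phi b)" using phi_subset_prime_filters by blast
  then show ?thesis
    using clopenin_XL_phi clopenin_XL_compl_phi unfolding clopenin_def by (metis closedin_Int openin_Int)
qed

lemma upset_phi: "upset_in (XL t) (\<subseteq>) (phi a)"
  unfolding upset_in_def topspace_XL using phi_subset_prime_filters by (auto simp: mem_phi mem_prime_filters)

lemma phi_in_ClopUp: "phi a \<in> ClopUp (XL t) (\<subseteq>)"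
  unfolding ClopUp_def using clopenin_XL_phi upset_phi by blast

lemma openin_XL_basic_nbhd:
  assumes "openin (XL t) U" "x \<in> U"
  obtains a b :: "'a::complete_lattice" where "x \<in> phi a" "x \<notin> phi b" "phi a - phi b \<subseteq> U"
proof -
  have "generate_topology_on (XL_subbasis t) U"
    using assms(1) unfolding XL_def openin_topology_generated_by_iff .
  then have "\<exists>a b::'a. x \<in> phi a \<and> x \<notin> phi b \<and> phi a - phi b \<subseteq> U"
    using assms(2)
  proof (induction arbitrary: x)
    case (Int U1 U2)
    then obtain a1 b1 a2 b2 :: 'a where "x \<in> phi a1" "x \<notin> phi b1" "phi a1 - phi b1 \<subseteq> U1"
      "x \<in> phi a2" "x \<notin> phi b2" "phi a2 - phi b2 \<subseteq> U2" by blast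
    then show ?case by (intro exI[of _ "inf a1 a2"] exI[of _ "sup b1 b2"]) (auto simp: phi_inf phi_sup)
  next
    case (Basis s)
    then consider a where "s = phi a" | a where "s = prime_filters t - phi a" by blast
    then show ?case
    proof cases
      case 1
      then show ?thesis using Basis(2) by (intro exI[of _ a] exI[of _ bot]) (auto simp: phi_bot)
    next
      case 2
      then show ?thesis using Basis(2) by (intro exI[of _ top] exI[of _ a]) (auto simp: phi_top[of t])
    qed
  next
    case (UN K)
    then show ?case by blast
  qed simp
  then show thesis using that by blast
qed

lemma XL_subbase:
  "topology (arbitrary union_of
     (finite intersection_of (\<lambda>U. U \<in> XL_subbasis t)
      relative_to prime_filters t)) = XL (t::'a::complete_lattice itself)"
proof (rule topology_base_unique)
  fix S
  assume "(finite intersection_of (\<lambda>U. U \<in> XL_subbasis t)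
      relative_to prime_filters t) S"
  then obtain \<U> where \<U>: "finite \<U>" "\<U> \<subseteq> XL_subbasis t"
    and S: "S = prime_filters t \<inter> \<Inter>\<U>"
    unfolding relative_to_def intersection_of_def by auto
  have "openin (XL t) (topspace (XL t) \<inter> \<Inter>\<U>)"
  proof (rule openin_Int_Inter[OF \<U>(1) openin_topspace])
    fix U assume "U \<in> \<U>"
    then show "openin (XL t) U" using \<U>(2) openin_XL_phi openin_XL_compl_phi by blast
  qed
  then show "openin (XL t) S" unfolding S topspace_XL .
next
  fix U x assume "openin (XL t) U" "x \<in> U"
  then obtain a b :: 'a where ab: "x \<in> phi a" "x \<notin> phi b" "phi a - phi b \<subseteq> U"
    by (rule openin_XL_basic_nbhd)
  let ?\<U> = "{phi a, prime_filters t - phi b}"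
  have "phi a - phi b = prime_filters t \<inter> \<Inter>?\<U>"
    using phi_subset_prime_filters by blast
  moreover have "(finite intersection_of (\<lambda>U. U \<in> XL_subbasis t)
      relative_to prime_filters t) (prime_filters t \<inter> \<Inter>?\<U>)"
    unfolding relative_to_def intersection_of_def by (intro exI[of _ "\<Inter>?\<U>"] conjI exI[of _ ?\<U>]) auto
  ultimately have "(finite intersection_of (\<lambda>U. U \<in> XL_subbasis t)
      relative_to prime_filters t) (phi a - phi b)" by simp
  then show "\<exists>B. (finite intersection_of (\<lambda>U. U \<in> XL_subbasis t)
      relative_to prime_filters t) B \<and> x \<in> B \<and> B \<subseteq> U"
    using ab by (intro exI[of _ "phi a - phi b"]) simp
qed

lemma prime_filters_cover:
  assumes "finite A" "finite B" "Inf B \<le> Sup A"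
  shows "prime_filters t \<subseteq> \<Union>(phi ` A \<union> (\<lambda>b. prime_filters t - phi b) ` B)"
proof
  fix x assume "x \<in> prime_filters t"
  then have x: "prime_filter x" by (simp add: mem_prime_filters)
  show "x \<in> \<Union>(phi ` A \<union> (\<lambda>b. prime_filters t - phi b) ` B)"
  proof (cases "B \<subseteq> x")
    case True
    then have "Sup A \<in> x"
      using prime_filter_Inf_finite[OF x assms(2)] prime_filter_up[OF x] assms(3) by blast
    then obtain a where "a \<in> A" "a \<in> x" using prime_filter_Sup_finite[OF x assms(1)] by blast
    then show ?thesis using x by (auto simp: mem_phi)
  next
    case False
    then obtain b where "b \<in> B" "b \<notin> x" by blast
    then show ?thesis using \<open>x \<in> prime_filters t\<close> by (auto simp: mem_phi)
  qed
qed

context frame_type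
begin

text \<open>Compactness is the prime filter theorem, applied via the Alexander subbase theorem.\<close>

lemma compact_space_XL: "compact_space (XL t)"
proof -
  have cover: "prime_filters t \<subseteq> \<Union>(XL_subbasis t)"
  proof
    fix x assume "x \<in> prime_filters t"
    then have "x \<in> phi top" by (simp add: phi_top[of t])
    then show "x \<in> \<Union>(XL_subbasis t)" by (rule UnionI[rotated]) (rule UnI1, rule rangeI)
  qed
  have "\<exists>C'. finite C' \<and> C' \<subseteq> C \<and> prime_filters t \<subseteq> \<Union>C'"
    if C: "C \<subseteq> XL_subbasis t" "prime_filters t \<subseteq> \<Union>C" for C
  proof (rule ccontr)
    assume no_finite: "\<not> ?thesis"
    let ?A = "{a. phi a \<in> C}" and ?B = "{b. prime_filters t - phi b \<in> C}"
    have "\<not> Inf B0 \<le> Sup A0" if "finite A0" "A0 \<subseteq> ?A" "finite B0" "B0 \<subseteq> ?B" for A0 B0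
    proof
      let ?C' = "phi ` A0 \<union> (\<lambda>b. prime_filters t - phi b) ` B0"
      assume "Inf B0 \<le> Sup A0"
      then have "prime_filters t \<subseteq> \<Union>?C'" by (rule prime_filters_cover[OF that(1,3)])
      moreover have "?C' \<subseteq> C" using that(2,4) by auto
      moreover have "finite ?C'" using that(1,3) by simp
      ultimately show False using no_finite by (meson exI)
    qed
    then obtain x where x: "prime_filter x" "?B \<subseteq> x" "x \<inter> ?A = {}"
      by (rule prime_filter_separation)
    then obtain U where U: "U \<in> C" "x \<in> U" using C(2) by (auto simp: mem_prime_filters)
    moreover obtain a where "U = phi a \<or> U = prime_filters t - phi a" using U(1) C(1) by blast
    ultimately show False using x by (auto simp: mem_phi)
  qed
  then show ?thesis using Alexander_subbase_alt[OF cover _ XL_subbase] by blast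
qed

lemma compactin_XL: "closedin (XL t) K \<Longrightarrow> compactin (XL t) K"
  by (rule closedin_compact_space[OF compact_space_XL])

lemma closed_cover_by_phi:
  assumes "closedin (XL t) K" "K \<subseteq> \<Union>(phi ` S)"
  obtains T where "T \<subseteq> S" "finite T" "K \<subseteq> phi (Sup T)"
proof -
  obtain \<F> where "finite \<F>" "\<F> \<subseteq> phi ` S" "K \<subseteq> \<Union>\<F>"
    using compactinD[OF compactin_XL[OF assms(1)] _ assms(2)] openin_XL_phi by blast
  moreover then obtain T where "T \<subseteq> S" "finite T" "\<F> = phi ` T"
    by (meson finite_subset_image)
  ultimately show thesis using that phi_Sup_finite[of T] by simp
qed

lemma phi_le_imp_le: "phi a \<subseteq> phi b \<Longrightarrow> (a::'a) \<le> b"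
  using prime_filter_separation_le[of a b] by (metis mem_phi subsetD)

lemma stone_space_XL: "stone_space (XL t)"
  unfolding stone_space_def
proof (intro conjI allI impI)
  show "compact_space (XL t)" by (rule compact_space_XL)
next
  show "Hausdorff_space (XL t)"
    unfolding Hausdorff_space_def
  proof (intro allI impI)
    fix x y assume xy: "x \<in> topspace (XL t) \<and> y \<in> topspace (XL t) \<and> x \<noteq> y"
    then have "prime_filter x" "prime_filter y" by (auto simp: topspace_XL mem_prime_filters)
    moreover obtain a :: 'a where "a \<in> x \<and> a \<notin> y \<or> a \<in> y \<and> a \<notin> x" using xy by blast
    ultimately have "x \<in> phi a \<and> y \<in> prime_filters t - phi a \<or> x \<in> prime_filters t - phi a \<and> y \<in> phi a"
      by (auto simp: mem_phi mem_prime_filters)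
    then show "\<exists>U V. openin (XL t) U \<and> openin (XL t) V \<and> x \<in> U \<and> y \<in> V \<and> disjnt U V"
    proof
      assume "x \<in> phi a \<and> y \<in> prime_filters t - phi a"
      then show ?thesis using openin_XL_phi[of t a] openin_XL_compl_phi[of t a]
        unfolding disjnt_def by blast
    next
      assume "x \<in> prime_filters t - phi a \<and> y \<in> phi a"
      then show ?thesis using openin_XL_phi[of t a] openin_XL_compl_phi[of t a]
        unfolding disjnt_def by blast
    qed
  qed
next
  fix U x assume "openin (XL t) U \<and> x \<in> U"
  then obtain a b :: 'a where "x \<in> phi a" "x \<notin> phi b" "phi a - phi b \<subseteq> U"
    by (meson openin_XL_basic_nbhd)
  then show "\<exists>V. clopenin (XL t) V \<and> x \<in> V \<and> V \<subseteq> U"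
    using clopenin_XL_phi_diff by blast
qed

lemma priestley_space_XL: "priestley_space (XL t) (\<subseteq>)"
  unfolding priestley_space_def
proof (intro conjI ballI impI)
  show "stone_space (XL t)" by (rule stone_space_XL)
  show "partial_order_on_space (XL t) (\<subseteq>)" unfolding partial_order_on_space_def by blast
next
  fix x y assume "x \<in> topspace (XL t)" "y \<in> topspace (XL t)" "\<not> x \<subseteq> y"
  then obtain a :: 'a where "x \<in> phi a" "y \<notin> phi a" by (auto simp: topspace_XL mem_prime_filters mem_phi)
  then show "\<exists>U\<in>ClopUp (XL t) (\<subseteq>). x \<in> U \<and> y \<notin> U" using phi_in_ClopUp by blast
qed

lemma open_upset_phi_nbhd:
  assumes W: "openin (XL t) W" "upset_in (XL t) (\<subseteq>) W" and "x \<in> W"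
  obtains a :: 'a where "x \<in> phi a" "phi a \<subseteq> W"
proof -
  let ?P = "prime_filters t"
  have x: "prime_filter x" using W(2) \<open>x \<in> W\<close> by (auto simp: upset_in_def topspace_XL mem_prime_filters)
  have closed: "closedin (XL t) (?P - W)"
    using closedin_diff[OF closedin_topspace W(1)] by (simp add: topspace_XL)
  have opens: "openin (XL t) U" if "U \<in> (\<lambda>a. ?P - phi a) ` x" for U
    using that openin_XL_compl_phi[of t] by blast
  have cover: "?P - W \<subseteq> \<Union>((\<lambda>a. ?P - phi a) ` x)"
  proof
    fix y assume y: "y \<in> ?P - W"
    then have "\<not> x \<subseteq> y" using W(2) \<open>x \<in> W\<close> unfolding upset_in_def topspace_XL by blast
    then obtain a where "a \<in> x" "a \<notin> y" by blast
    then show "y \<in> \<Union>((\<lambda>a. ?P - phi a) ` x)" using y by (auto simp: mem_phi)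
  qed
  obtain \<F> where "finite \<F>" "\<F> \<subseteq> (\<lambda>a. ?P - phi a) ` x" "?P - W \<subseteq> \<Union>\<F>"
    using compactinD[OF compactin_XL[OF closed] opens cover] by blast
  then obtain A where A: "A \<subseteq> x" "finite A" "?P - W \<subseteq> \<Union>((\<lambda>a. ?P - phi a) ` A)"
    by (metis finite_subset_image)
  have "phi (Inf A) \<subseteq> W"
  proof
    fix y assume y: "y \<in> phi (Inf A)"
    then have "y \<in> phi a" if "a \<in> A" for a using phi_mono[OF Inf_lower[OF that]] by blast
    then show "y \<in> W" using y A(3) phi_subset_prime_filters[of _ t] by blast
  qed
  moreover have "x \<in> phi (Inf A)" using prime_filter_Inf_finite[OF x A(2,1)] x by (simp add: mem_phi)
  ultimately show thesis using that by blast
qed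

lemma open_upset_eq_Union_phi:
  assumes "openin (XL t) W" "upset_in (XL t) (\<subseteq>) W"
  shows "W = \<Union>(phi ` {a::'a. phi a \<subseteq> W})"
proof
  show "W \<subseteq> \<Union>(phi ` {a. phi a \<subseteq> W})"
  proof
    fix x assume "x \<in> W"
    then obtain a :: 'a where "x \<in> phi a" "phi a \<subseteq> W" by (rule open_upset_phi_nbhd[OF assms])
    then show "x \<in> \<Union>(phi ` {a. phi a \<subseteq> W})" by blast
  qed
qed blast

lemma ClopUp_XL: "ClopUp (XL t) (\<subseteq>) = range (phi :: 'a \<Rightarrow> _)"
proof
  show "range phi \<subseteq> ClopUp (XL t) (\<subseteq>)" using phi_in_ClopUp by blast
next
  show "ClopUp (XL t) (\<subseteq>) \<subseteq> range phi"
  proof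
    fix U assume "U \<in> ClopUp (XL t) (\<subseteq>)"
    then have U: "openin (XL t) U" "closedin (XL t) U" "upset_in (XL t) (\<subseteq>) U"
      unfolding ClopUp_def clopenin_def by auto
    have "U \<subseteq> \<Union>(phi ` {a::'a. phi a \<subseteq> U})" using open_upset_eq_Union_phi[OF U(1,3)] by blast
    then obtain T where "T \<subseteq> {a. phi a \<subseteq> U}" "finite T" "U \<subseteq> phi (Sup T)"
      by (rule closed_cover_by_phi[OF U(2)])
    then have "U = phi (Sup T)" using phi_Sup_finite[of T] by auto
    then show "U \<in> range phi" by blast
  qed
qed

lemma closure_of_Union_phi: "XL t closure_of \<Union>(phi ` S) = phi (Sup (S::'a set))"
proof
  show "XL t closure_of \<Union>(phi ` S) \<subseteq> phi (Sup S)"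
    using phi_mono[OF Sup_upper] by (intro closure_of_minimal closedin_XL_phi) blast
next
  show "phi (Sup S) \<subseteq> XL t closure_of \<Union>(phi ` S)"
  proof
    fix x assume x: "x \<in> phi (Sup S)"
    show "x \<in> XL t closure_of \<Union>(phi ` S)"
      unfolding in_closure_of
    proof (intro conjI allI impI)
      show "x \<in> topspace (XL t)" using x phi_subset_prime_filters[of _ t] by (auto simp: topspace_XL)
    next
      fix T assume "x \<in> T \<and> openin (XL t) T"
      then obtain c d :: 'a where cd: "x \<in> phi c" "x \<notin> phi d" "phi c - phi d \<subseteq> T"
        by (meson openin_XL_basic_nbhd)
      show "\<exists>y. y \<in> \<Union>(phi ` S) \<and> y \<in> T"
      proof (rule ccontr)
        assume "\<not> ?thesis"
        then have "phi (inf c s) \<subseteq> phi d" if "s \<in> S" for s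
          using that cd(3) by (auto simp: phi_inf)
        then have "inf c s \<le> d" if "s \<in> S" for s using that phi_le_imp_le by blast
        then have "inf c (Sup S) \<le> d" by (simp add: inf_Sup_distrib SUP_least)
        moreover have "inf c (Sup S) \<in> x" using x cd(1) by (auto simp: mem_phi prime_filter_inf_iff)
        ultimately show False using cd(2) x by (auto simp: mem_phi intro: prime_filter_up)
      qed
    qed
  qed
qed

lemma closure_of_open_upset:
  assumes "openin (XL t) W" "upset_in (XL t) (\<subseteq>) W"
  shows "XL t closure_of W = phi (Sup {a::'a. phi a \<subseteq> W})"
  using closure_of_Union_phi open_upset_eq_Union_phi[OF assms] by metis

lemma prime_filter_above_heyting_imp:
  assumes y: "prime_filter y" "heyting_imp a b \<notin> y"
  obtains x where "prime_filter x" "y \<subseteq> x" "a \<in> x" "b \<notin> (x::'a set)"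
proof -
  obtain x where "prime_filter x" "insert a y \<subseteq> x" "x \<inter> {b} = {}"
  proof (rule prime_filter_separation)
    fix A0 B0 assume "finite A0" "A0 \<subseteq> {b}" "finite B0" "B0 \<subseteq> insert a y"
    show "\<not> Inf B0 \<le> Sup A0"
    proof
      assume "Inf B0 \<le> Sup A0"
      then have "inf a (Inf (B0 - {a})) \<le> b"
        using inf_Inf_Diff_le[of a B0] Sup_least[of A0 b] \<open>A0 \<subseteq> {b}\<close> by (blast intro: order_trans)
      then have "Inf (B0 - {a}) \<le> heyting_imp a b" by (simp add: le_heyting_imp_iff inf_commute)
      moreover have "Inf (B0 - {a}) \<in> y"
        using prime_filter_Inf_finite[OF y(1)] \<open>finite B0\<close> \<open>B0 \<subseteq> insert a y\<close> by blast
      ultimately show False using y prime_filter_up by blast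
    qed
  qed
  then show thesis using that by blast
qed

lemma down_of_phi_diff:
  "down_of (XL t) (\<subseteq>) (phi a - phi b) = prime_filters t - phi (heyting_imp a (b::'a))"
proof
  show "down_of (XL t) (\<subseteq>) (phi a - phi b) \<subseteq> prime_filters t - phi (heyting_imp a b)"
  proof
    fix y assume "y \<in> down_of (XL t) (\<subseteq>) (phi a - phi b)"
    then obtain x where y: "y \<in> prime_filters t" "y \<subseteq> x" and x: "prime_filter x" "a \<in> x" "b \<notin> x"
      unfolding down_of_def topspace_XL by (auto simp: mem_phi)
    have "heyting_imp a b \<notin> x"
    proof
      assume "heyting_imp a b \<in> x"
      then have "inf (heyting_imp a b) a \<in> x" using x by (simp add: prime_filter_inf_iff)
      then show False using x prime_filter_up le_heyting_imp_iff by blast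
    qed
    then show "y \<in> prime_filters t - phi (heyting_imp a b)" using y by (auto simp: mem_phi)
  qed
next
  show "prime_filters t - phi (heyting_imp a b) \<subseteq> down_of (XL t) (\<subseteq>) (phi a - phi b)"
  proof
    fix y assume "y \<in> prime_filters t - phi (heyting_imp a b)"
    then have y: "prime_filter y" "heyting_imp a b \<notin> y" by (auto simp: mem_prime_filters mem_phi)
    obtain x where "prime_filter x" "y \<subseteq> x" "a \<in> x" "b \<notin> x"
      by (rule prime_filter_above_heyting_imp[OF y])
    then show "y \<in> down_of (XL t) (\<subseteq>) (phi a - phi b)"
      unfolding down_of_def topspace_XL using y(1) by (auto simp: mem_phi mem_prime_filters)
  qed
qed

lemma clopenin_down_of_XL:
  assumes U: "clopenin (XL t) U"
  shows "clopenin (XL t) (down_of (XL t) (\<subseteq>) U)"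
proof -
  let ?\<B> = "{phi a - phi b | a b :: 'a. phi a - phi b \<subseteq> U}"
  have cover: "U \<subseteq> \<Union>?\<B>"
  proof
    fix x assume "x \<in> U"
    then obtain a b :: 'a where "x \<in> phi a" "x \<notin> phi b" "phi a - phi b \<subseteq> U"
      using openin_XL_basic_nbhd U unfolding clopenin_def by metis
    then show "x \<in> \<Union>?\<B>" by blast
  qed
  have opens: "openin (XL t) B" if "B \<in> ?\<B>" for B
    using that clopenin_XL_phi_diff unfolding clopenin_def by blast
  have "compactin (XL t) U" using U compactin_XL unfolding clopenin_def by blast
  then obtain \<F> where \<F>: "finite \<F>" "\<F> \<subseteq> ?\<B>" "U \<subseteq> \<Union>\<F>"
    using compactinD[OF _ opens cover] by blast
  then have "U = \<Union>\<F>" by blast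
  then have "down_of (XL t) (\<subseteq>) U = \<Union>(down_of (XL t) (\<subseteq>) ` \<F>)"
    unfolding down_of_def by blast
  moreover have "clopenin (XL t) (down_of (XL t) (\<subseteq>) B)" if B: "B \<in> \<F>" for B
  proof -
    obtain a b :: 'a where "B = phi a - phi b" using B \<F>(2) by blast
    then show ?thesis using clopenin_XL_compl_phi by (simp add: down_of_phi_diff)
  qed
  ultimately show ?thesis
    using \<F>(1) unfolding clopenin_def by (auto intro: closedin_Union)
qed

lemma L_space_XL: "L_space (XL t) (\<subseteq>)"
  unfolding L_space_def
proof (intro conjI allI impI)
  show "priestley_space (XL t) (\<subseteq>)" by (rule priestley_space_XL)
next
  fix U assume "clopenin (XL t) U"
  then show "clopenin (XL t) (down_of (XL t) (\<subseteq>) U)" by (rule clopenin_down_of_XL)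
next
  fix U assume "openin (XL t) U \<and> upset_in (XL t) (\<subseteq>) U"
  then show "openin (XL t) (XL t closure_of U)" using closure_of_open_upset openin_XL_phi by simp
qed

section \<open>The way-below relation on the Priestley space\<close>

lemma way_below_sp_phi_iff:
  "way_below_sp (XL t) (\<subseteq>) (phi c) (phi a) \<longleftrightarrow> way_below c (a::'a)"
proof
  assume wb: "way_below c a"
  show "way_below_sp (XL t) (\<subseteq>) (phi c) (phi a)"
    unfolding way_below_sp_def
  proof (intro allI impI)
    fix W assume W: "openin (XL t) W \<and> upset_in (XL t) (\<subseteq>) W" and "phi a \<subseteq> XL t closure_of W"
    then have "a \<le> Sup {d::'a. phi d \<subseteq> W}"
      using closure_of_open_upset phi_le_imp_le by simp
    then obtain T where T: "T \<subseteq> {d. phi d \<subseteq> W}" "finite T" "c \<le> Sup T"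
      using wb unfolding way_below_def by meson
    then show "phi c \<subseteq> W" using phi_mono[OF T(3)] phi_Sup_finite[OF T(2)] by blast
  qed
next
  assume wbs: "way_below_sp (XL t) (\<subseteq>) (phi c) (phi a)"
  show "way_below c a"
    unfolding way_below_def
  proof (intro allI impI)
    fix S assume "a \<le> Sup S"
    then have "phi a \<subseteq> XL t closure_of \<Union>(phi ` S)"
      using phi_mono closure_of_Union_phi by metis
    moreover have "openin (XL t) (\<Union>(phi ` S))" using openin_XL_phi[of t] by blast
    moreover have "upset_in (XL t) (\<subseteq>) (\<Union>(phi ` S))"
      using upset_phi[of t] unfolding upset_in_def by blast
    ultimately have "phi c \<subseteq> \<Union>(phi ` S)" using wbs unfolding way_below_sp_def by blast
    then obtain T where "T \<subseteq> S" "finite T" "phi c \<subseteq> phi (Sup T)"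
      by (rule closed_cover_by_phi[OF closedin_XL_phi])
    then show "\<exists>T\<subseteq>S. finite T \<and> c \<le> Sup T" using phi_le_imp_le by blast
  qed
qed

lemma ker_sp_phi: "ker_sp (XL t) (\<subseteq>) (phi a) = \<Union>(phi ` {c::'a. way_below c a})"
  unfolding ker_sp_def ClopUp_XL using way_below_sp_phi_iff by blast

lemma way_below_inf_if_ker_sp_Int:
  assumes ker: "ker_sp (XL t) (\<subseteq>) (phi b \<inter> phi c)
      = ker_sp (XL t) (\<subseteq>) (phi b) \<inter> ker_sp (XL t) (\<subseteq>) (phi c)"
    and "way_below a b" "way_below a (c::'a)"
  shows "way_below a (inf b c)"
proof -
  have "phi a \<subseteq> ker_sp (XL t) (\<subseteq>) (phi b) \<inter> ker_sp (XL t) (\<subseteq>) (phi c)"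
    using assms(2,3) unfolding ker_sp_phi by blast
  also have "\<dots> = ker_sp (XL t) (\<subseteq>) (phi (inf b c))" using ker by (simp add: phi_inf)
  also have "\<dots> = \<Union>(phi ` {d. way_below d (inf b c)})" by (rule ker_sp_phi)
  finally have "phi a \<subseteq> \<Union>(phi ` {d. way_below d (inf b c)})" .
  then obtain D where D: "D \<subseteq> {d. way_below d (inf b c)}" "finite D" "phi a \<subseteq> phi (Sup D)"
    by (rule closed_cover_by_phi[OF closedin_XL_phi])
  have "a \<le> Sup D" using D(3) by (rule phi_le_imp_le)
  moreover have "way_below (Sup D) (inf b c)" using D(1) by (intro way_below_Sup_finite[OF D(2)]) blast
  ultimately show "way_below a (inf b c)" by (rule way_below_mono[OF _ _ order_refl])
qed

lemma ker_sp_Int_phi_if_stable: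
  assumes stable: "\<forall>a b c::'a. way_below a b \<and> way_below a c \<longrightarrow> way_below a (inf b c)"
  shows "ker_sp (XL t) (\<subseteq>) (phi b \<inter> phi c)
      = ker_sp (XL t) (\<subseteq>) (phi b) \<inter> ker_sp (XL t) (\<subseteq>) (phi (c::'a))"
  unfolding phi_inf[symmetric] ker_sp_phi
proof
  show "\<Union>(phi ` {d. way_below d (inf b c)})
      \<subseteq> \<Union>(phi ` {d. way_below d b}) \<inter> \<Union>(phi ` {d. way_below d c})"
  proof
    fix x assume "x \<in> \<Union>(phi ` {d. way_below d (inf b c)})"
    then obtain d where d: "way_below d (inf b c)" "x \<in> phi d" by blast
    have "way_below d b" "way_below d c"
      using way_below_mono[OF order_refl d(1) inf_le1] way_below_mono[OF order_refl d(1) inf_le2] .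
    then show "x \<in> \<Union>(phi ` {d. way_below d b}) \<inter> \<Union>(phi ` {d. way_below d c})"
      using d(2) by blast
  qed
next
  show "\<Union>(phi ` {d. way_below d b}) \<inter> \<Union>(phi ` {d. way_below d c})
      \<subseteq> \<Union>(phi ` {d. way_below d (inf b c)})"
  proof
    fix x assume "x \<in> \<Union>(phi ` {d. way_below d b}) \<inter> \<Union>(phi ` {d. way_below d c})"
    then obtain d d' where "way_below d b" "x \<in> phi d" "way_below d' c" "x \<in> phi d'" by blast
    moreover from this have "way_below (inf d d') b" "way_below (inf d d') c"
      using way_below_mono[OF inf_le1 _ order_refl] way_below_mono[OF inf_le2 _ order_refl] by blast+
    then have "way_below (inf d d') (inf b c)" using stable by blast
    ultimately show "x \<in> \<Union>(phi ` {d. way_below d (inf b c)})"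
      using phi_inf[of d d'] by blast
  qed
qed

lemma ker_sp_Int_iff_stable:
  "(\<forall>U\<in>ClopUp (XL t) (\<subseteq>). \<forall>V\<in>ClopUp (XL t) (\<subseteq>).
      ker_sp (XL t) (\<subseteq>) (U \<inter> V) = ker_sp (XL t) (\<subseteq>) U \<inter> ker_sp (XL t) (\<subseteq>) V)
   \<longleftrightarrow> (\<forall>a b c::'a. way_below a b \<and> way_below a c \<longrightarrow> way_below a (inf b c))"
  (is "?ker \<longleftrightarrow> ?stable")
proof
  assume ker: ?ker
  show ?stable
  proof (intro allI impI)
    fix a b c :: 'a assume "way_below a b \<and> way_below a c"
    moreover have "ker_sp (XL t) (\<subseteq>) (phi b \<inter> phi c)
        = ker_sp (XL t) (\<subseteq>) (phi b) \<inter> ker_sp (XL t) (\<subseteq>) (phi c)"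
      using ker phi_in_ClopUp[of b t] phi_in_ClopUp[of c t] by blast
    ultimately show "way_below a (inf b c)" using way_below_inf_if_ker_sp_Int by blast
  qed
next
  assume stable: ?stable
  show ?ker
  proof (intro ballI)
    fix U V assume "U \<in> ClopUp (XL t) (\<subseteq>)" "V \<in> ClopUp (XL t) (\<subseteq>)"
    then obtain b c :: 'a where "U = phi b" "V = phi c" unfolding ClopUp_XL by blast
    then show "ker_sp (XL t) (\<subseteq>) (U \<inter> V) = ker_sp (XL t) (\<subseteq>) U \<inter> ker_sp (XL t) (\<subseteq>) V"
      using ker_sp_Int_phi_if_stable[OF stable] by simp
  qed
qed

section \<open>The spatial part\<close>

abbreviation Y :: "'a set set" where
  "Y \<equiv> spatial_part (XL t) (\<subseteq>)"

abbreviation Ytop :: "'a set topology" where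
  "Ytop \<equiv> spatial_topology (XL t) (\<subseteq>)"

lemma down_of_XL_singleton: "down_of (XL t) (\<subseteq>) {y} = {x \<in> prime_filters t. x \<subseteq> y}"
  unfolding down_of_def topspace_XL by blast

text \<open>Prime filters with principal complement are exactly the completely prime filters,
  i.e. the points of the frame.\<close>

lemma principal_complement_in_Y:
  assumes p: "prime_filter {z. \<not> z \<le> (p::'a)}"
  shows "{z. \<not> z \<le> p} \<in> Y"
proof -
  have below: "x \<subseteq> {z. \<not> z \<le> p} \<longleftrightarrow> p \<notin> x" if "prime_filter x" for x
    using prime_filter_up[OF that] by blast
  have "x \<in> down_of (XL t) (\<subseteq>) {{z. \<not> z \<le> p}} \<longleftrightarrow> x \<in> prime_filters t - phi p" for x
    unfolding down_of_XL_singleton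
    by (cases "prime_filter x") (simp_all add: mem_prime_filters mem_phi below)
  then have "down_of (XL t) (\<subseteq>) {{z. \<not> z \<le> p}} = prime_filters t - phi p" by blast
  then show ?thesis
    unfolding spatial_part_def using clopenin_XL_compl_phi[of t p] p
    by (simp add: topspace_XL mem_prime_filters)
qed

lemma Y_complement_principal:
  assumes "y \<in> Y"
  shows "\<exists>p::'a. y = {z. \<not> z \<le> p}"
proof -
  from assms have y: "prime_filter y" and "openin (XL t) {x \<in> prime_filters t. x \<subseteq> y}"
    unfolding spatial_part_def down_of_XL_singleton clopenin_def
    by (auto simp: topspace_XL mem_prime_filters)
  then have "closedin (XL t) (topspace (XL t) - {x \<in> prime_filters t. x \<subseteq> y})"
    by (intro closedin_diff closedin_topspace)
  then have "closedin (XL t) (prime_filters t - {x \<in> prime_filters t. x \<subseteq> y})"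
    by (simp only: topspace_XL)
  moreover have "prime_filters t - {x \<in> prime_filters t. x \<subseteq> y} \<subseteq> \<Union>(phi ` (- y))"
    by (auto simp: mem_phi mem_prime_filters)
  ultimately obtain A where A: "A \<subseteq> - y" "finite A"
    and cover: "prime_filters t - {x \<in> prime_filters t. x \<subseteq> y} \<subseteq> phi (Sup A)"
    by (rule closed_cover_by_phi)
  have "z \<notin> y \<longleftrightarrow> z \<le> Sup A" for z
  proof
    assume "z \<notin> y"
    show "z \<le> Sup A"
    proof (rule ccontr)
      assume "\<not> z \<le> Sup A"
      then obtain x where "prime_filter x" "z \<in> x" "Sup A \<notin> x" by (rule prime_filter_separation_le)
      then show False using cover \<open>z \<notin> y\<close> by (auto simp: mem_prime_filters mem_phi)
    qed
  next
    assume "z \<le> Sup A"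
    moreover have "Sup A \<notin> y" using prime_filter_Sup_finite[OF y A(2)] A(1) by blast
    ultimately show "z \<notin> y" using prime_filter_up[OF y] by blast
  qed
  then show ?thesis by blast
qed

lemma spatial_part_XL:
  "y \<in> Y \<longleftrightarrow> prime_filter y \<and> (\<exists>p::'a. y = {z. \<not> z \<le> p})"
  using principal_complement_in_Y Y_complement_principal
  unfolding spatial_part_def by (auto simp: topspace_XL mem_prime_filters)

lemma spatial_point_below:
  assumes k: "compact_el k" and x: "x \<in> phi (k::'a)"
  obtains y where "y \<in> Y" "y \<in> phi k" "y \<subseteq> x"
proof -
  have px: "prime_filter x" "k \<in> x" using x by (auto simp: mem_phi)
  have "\<not> k \<le> Sup (- x)"
  proof
    assume "k \<le> Sup (- x)"
    then obtain T where "T \<subseteq> - x" "finite T" "k \<le> Sup T"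
      using k unfolding compact_el_def way_below_def by meson
    then show False using prime_filter_up[OF px] prime_filter_Sup_finite[OF px(1)] by blast
  qed
  then obtain p where p: "Sup (- x) \<le> p" "\<not> k \<le> p" "prime_filter {z. \<not> z \<le> p}"
    by (rule prime_element_separation[OF k])
  have "{z. \<not> z \<le> p} \<subseteq> x"
    using p(1) Sup_upper[of _ "- x"] order_trans by blast
  moreover have "{z. \<not> z \<le> p} \<in> Y" using p(3) spatial_part_XL by blast
  moreover have "{z. \<not> z \<le> p} \<in> phi k" using p(2,3) by (simp add: mem_phi)
  ultimately show thesis using that by blast
qed

lemma phi_in_ClopSUp:
  assumes "compact_el (k::'a)"
  shows "phi k \<in> ClopSUp (XL t) (\<subseteq>)"
proof -
  have "y \<in> Y" if "y \<in> min_of (\<subseteq>) (phi k)" for y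
  proof -
    from that have y: "y \<in> phi k" and min: "\<And>y'. y' \<in> phi k \<Longrightarrow> y' \<subseteq> y \<Longrightarrow> y' = y"
      unfolding min_of_def by blast+
    obtain y' where "y' \<in> Y" "y' \<in> phi k" "y' \<subseteq> y"
      by (rule spatial_point_below[OF assms y])
    then show ?thesis using min by blast
  qed
  then show ?thesis
    unfolding ClopSUp_def scott_upset_def
    using phi_in_ClopUp[of k t] closedin_XL_phi[of t k] upset_phi[of t k] by blast
qed

lemma phi_Sup_inter_Y: "phi (Sup S) \<inter> Y = (\<Union>s\<in>S. phi s \<inter> Y)"
proof
  show "phi (Sup S) \<inter> Y \<subseteq> (\<Union>s\<in>S. phi s \<inter> Y)"
  proof
    fix y assume y: "y \<in> phi (Sup S) \<inter> Y"
    then obtain p :: 'a where p: "y = {z. \<not> z \<le> p}" and "prime_filter y"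
      using spatial_part_XL by blast
    moreover have "\<not> Sup S \<le> p" using y p by (simp add: mem_phi)
    then obtain s where "s \<in> S" "\<not> s \<le> p" by (meson Sup_least)
    ultimately show "y \<in> (\<Union>s\<in>S. phi s \<inter> Y)" using y by (auto simp: mem_phi)
  qed
  show "(\<Union>s\<in>S. phi s \<inter> Y) \<subseteq> phi (Sup S) \<inter> Y"
    using phi_mono[OF Sup_upper] by blast
qed

lemma Union_phi_inter_Y:
  assumes "\<And>U. U \<in> \<V> \<Longrightarrow> U = phi (f U) \<inter> Y"
  shows "\<Union>\<V> = phi (Sup (f ` \<V>)) \<inter> Y"
  unfolding phi_Sup_inter_Y image_image using assms by auto

lemma openin_Ytop: "openin Ytop V \<longleftrightarrow> (\<exists>a::'a. V = phi a \<inter> Y)"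
proof -
  have "istopology (\<lambda>V. \<exists>a::'a. V = phi a \<inter> Y)"
    unfolding istopology_def
  proof (intro conjI allI impI)
    fix S T assume "\<exists>a::'a. S = phi a \<inter> Y" "\<exists>a::'a. T = phi a \<inter> Y"
    then obtain a b :: 'a where "S = phi a \<inter> Y" "T = phi b \<inter> Y" by blast
    then have "S \<inter> T = phi (inf a b) \<inter> Y" by (auto simp: phi_inf)
    then show "\<exists>a::'a. S \<inter> T = phi a \<inter> Y" by blast
  next
    fix \<K> assume "\<forall>V\<in>\<K>. \<exists>a::'a. V = phi a \<inter> Y"
    then obtain f where "\<And>V. V \<in> \<K> \<Longrightarrow> V = phi (f V) \<inter> Y" by metis
    then have "\<Union>\<K> = phi (Sup (f ` \<K>)) \<inter> Y" by (rule Union_phi_inter_Y)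
    then show "\<exists>a::'a. \<Union>\<K> = phi a \<inter> Y" by blast
  qed
  moreover have "(\<lambda>V. \<exists>U\<in>ClopUp (XL t) (\<subseteq>). V = U \<inter> Y) = (\<lambda>V. \<exists>a::'a. V = phi a \<inter> Y)"
    unfolding ClopUp_XL by blast
  ultimately show ?thesis unfolding spatial_topology_def by simp
qed

lemma topspace_Ytop: "topspace Ytop = Y"
proof -
  have "phi (top::'a) \<inter> Y = Y"
    using spatial_part_XL by (auto simp: mem_phi prime_filter_top)
  then have "openin Ytop Y" using openin_Ytop by metis
  then show ?thesis using openin_Ytop by (auto dest: openin_subset simp: topspace_def)
qed

lemma closure_of_Ytop_singleton:
  assumes "y \<in> Y"
  shows "Ytop closure_of {y} = {x \<in> Y. x \<subseteq> y}"
proof -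
  have "x \<in> Ytop closure_of {y} \<longleftrightarrow> x \<subseteq> y" if "x \<in> Y" for x
  proof -
    have "prime_filter x" "prime_filter y" using that assms spatial_part_XL by blast+
    have "x \<in> Ytop closure_of {y} \<longleftrightarrow> (\<forall>a::'a. x \<in> phi a \<longrightarrow> y \<in> phi a)"
    proof
      assume "x \<in> Ytop closure_of {y}"
      then have "y \<in> phi a \<inter> Y" if "x \<in> phi a \<inter> Y" for a :: 'a
        using that unfolding in_closure_of openin_Ytop by blast
      then show "\<forall>a::'a. x \<in> phi a \<longrightarrow> y \<in> phi a" using \<open>x \<in> Y\<close> by blast
    next
      assume "\<forall>a::'a. x \<in> phi a \<longrightarrow> y \<in> phi a"
      then show "x \<in> Ytop closure_of {y}"
        unfolding in_closure_of openin_Ytop topspace_Ytop using \<open>x \<in> Y\<close> assms by blast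
    qed
    then show ?thesis using \<open>prime_filter x\<close> \<open>prime_filter y\<close> by (auto simp: mem_phi)
  qed
  moreover have "Ytop closure_of {y} \<subseteq> Y" using closure_of_subset_topspace topspace_Ytop by metis
  ultimately show ?thesis by blast
qed

lemma closedin_Ytop_compl_phi: "closedin Ytop (Y - phi (a::'a))"
  unfolding closedin_def topspace_Ytop openin_Ytop by (auto intro: exI[of _ a])

lemma irreducible_closed_Ytop:
  assumes "irreducible_closed Ytop C"
  obtains p :: 'a where "prime_filter {z. \<not> z \<le> p}" "C = Y - phi p"
proof -
  have C: "closedin Ytop C" "C \<noteq> {}"
    and irr: "\<And>A B. closedin Ytop A \<Longrightarrow> closedin Ytop B \<Longrightarrow> C \<subseteq> A \<union> B \<Longrightarrow>
      C \<subseteq> A \<or> C \<subseteq> B"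
    using assms unfolding irreducible_closed_def by blast+
  have CY: "C \<subseteq> Y" using closedin_subset[OF C(1)] by (simp add: topspace_Ytop)
  obtain c :: 'a where c: "Y - C = phi c \<inter> Y"
    using C(1) unfolding closedin_def topspace_Ytop openin_Ytop by blast
  define p where "p = Sup {a::'a. phi a \<inter> C = {}}"
  have below: "a \<le> p" if "phi a \<inter> C = {}" for a :: 'a
    unfolding p_def using that by (simp add: Sup_upper)
  have pC: "phi p \<inter> C = {}"
    using CY phi_Sup_inter_Y[of "{a. phi a \<inter> C = {}}"] unfolding p_def by blast
  have "x \<le> p \<or> y \<le> p" if "inf x y \<le> p" for x y :: 'a
  proof -
    have "C \<subseteq> (Y - phi x) \<union> (Y - phi y)"
      using CY pC phi_mono[OF that] by (auto simp: phi_inf)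
    then have "C \<subseteq> Y - phi x \<or> C \<subseteq> Y - phi y" using irr closedin_Ytop_compl_phi by blast
    then show ?thesis using below by blast
  qed
  moreover have "\<not> top \<le> p"
  proof
    assume "top \<le> p"
    then have "phi (top::'a) \<inter> C = {}" using pC phi_mono by blast
    moreover obtain x where "x \<in> C" using C(2) by blast
    moreover then have "prime_filter x" using CY spatial_part_XL by blast
    ultimately show False using mem_phi[of x "top::'a"] prime_filter_top by blast
  qed
  ultimately have "prime_filter {z. \<not> z \<le> p}"
    unfolding prime_filter_def by (auto intro: order_trans)
  moreover have "C = Y - phi p"
  proof
    show "C \<subseteq> Y - phi p" using CY pC by blast
    have "phi c \<inter> C = {}" using c CY by blast
    then show "Y - phi p \<subseteq> C" using c phi_mono[OF below] by blast
  qed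
  ultimately show thesis using that by blast
qed

lemma sober_space_Ytop: "sober_space Ytop"
  unfolding sober_space_def
proof (intro allI impI)
  fix C assume "irreducible_closed Ytop C"
  then obtain p :: 'a where p: "prime_filter {z. \<not> z \<le> p}" and C: "C = Y - phi p"
    by (rule irreducible_closed_Ytop)
  let ?y = "{z. \<not> z \<le> p}"
  have y: "?y \<in> Y" using p spatial_part_XL by blast
  have "x \<subseteq> ?y \<longleftrightarrow> x \<notin> phi p" if "x \<in> Y" for x
    using that spatial_part_XL prime_filter_up by (fastforce simp: mem_phi)
  then have closure_y: "Ytop closure_of {?y} = C" unfolding C closure_of_Ytop_singleton[OF y] by blast
  show "\<exists>!x. x \<in> topspace Ytop \<and> C = Ytop closure_of {x}"
  proof (rule ex1I[of _ ?y])
    show "?y \<in> topspace Ytop \<and> C = Ytop closure_of {?y}" using y closure_y topspace_Ytop by simp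
  next
    fix x assume x: "x \<in> topspace Ytop \<and> C = Ytop closure_of {x}"
    then have "x \<in> Y" by (simp add: topspace_Ytop)
    then have "{z \<in> Y. z \<subseteq> x} = Ytop closure_of {x}" by (rule closure_of_Ytop_singleton[symmetric])
    also have "\<dots> = Ytop closure_of {?y}" using x closure_y by simp
    also have "\<dots> = {z \<in> Y. z \<subseteq> ?y}" by (rule closure_of_Ytop_singleton[OF y])
    finally have eq: "{z \<in> Y. z \<subseteq> x} = {z \<in> Y. z \<subseteq> ?y}" .
    have "x \<in> {z \<in> Y. z \<subseteq> ?y}" using \<open>x \<in> Y\<close> by (simp flip: eq)
    moreover have "?y \<in> {z \<in> Y. z \<subseteq> x}" using y by (simp add: eq)
    ultimately show "x = ?y" by (simp add: subset_antisym)
  qed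
qed

end

locale algebraic_frame_type = frame_type t for t :: "'a::complete_lattice itself" +
  assumes algebraic: "\<And>x::'a. x = Sup {k. compact_el k \<and> k \<le> x}"
begin

lemma algebraic_L_space_XL: "algebraic_L_space (XL t) (\<subseteq>)"
  unfolding algebraic_L_space_def ClopUp_XL
proof (intro conjI ballI)
  show "L_space (XL t) (\<subseteq>)" by (rule L_space_XL)
next
  fix U assume "U \<in> range (phi :: 'a \<Rightarrow> _)"
  then obtain a :: 'a where U: "U = phi a" by blast
  show "U \<subseteq> XL t closure_of core_sp (XL t) (\<subseteq>) U"
  proof
    fix x assume "x \<in> U"
    then have x: "prime_filter x" "a \<in> x" using U by (auto simp: mem_phi)
    show "x \<in> XL t closure_of core_sp (XL t) (\<subseteq>) U"
      unfolding in_closure_of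
    proof (intro conjI allI impI)
      show "x \<in> topspace (XL t)" using x by (simp add: topspace_XL mem_prime_filters)
    next
      fix T assume "x \<in> T \<and> openin (XL t) T"
      then obtain c d :: 'a where cd: "x \<in> phi c" "x \<notin> phi d" "phi c - phi d \<subseteq> T"
        by (meson openin_XL_basic_nbhd)
      have "\<not> inf a c \<le> d"
      proof
        assume "inf a c \<le> d"
        moreover have "inf a c \<in> x" using x cd(1) by (simp add: mem_phi prime_filter_inf_iff)
        ultimately show False using cd(2) x prime_filter_up by (auto simp: mem_phi)
      qed
      then obtain k where k: "compact_el k" "k \<le> inf a c" "\<not> k \<le> d"
        by (rule compact_el_witness[OF algebraic])
      then obtain z where z: "prime_filter z" "k \<in> z" "d \<notin> z" by (meson prime_filter_separation_le)
      have "phi k \<subseteq> U" using k(2) U phi_mono by fastforce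
      then have "z \<in> core_sp (XL t) (\<subseteq>) U"
        unfolding core_sp_def using phi_in_ClopSUp[OF k(1)] z by (auto simp: mem_phi)
      moreover have "z \<in> T"
        using cd(3) z k(2) prime_filter_up[OF z(1,2)] by (auto simp: mem_phi)
      ultimately show "\<exists>y. y \<in> core_sp (XL t) (\<subseteq>) U \<and> y \<in> T" by blast
    qed
  qed
qed

section \<open>Compact opens of the spatial part\<close>

lemma phi_inter_Y_le_imp_le:
  assumes sub: "phi a \<inter> Y \<subseteq> phi b \<inter> Y"
  shows "a \<le> b"
proof (rule ccontr)
  assume "\<not> a \<le> b"
  then obtain k where k: "compact_el k" "k \<le> a" "\<not> k \<le> b"
    by (rule compact_el_witness[OF algebraic])
  obtain p where p: "b \<le> p" "\<not> k \<le> p" "prime_filter {z. \<not> z \<le> p}"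
    by (rule prime_element_separation[OF k(1,3)])
  have "\<not> a \<le> p" using k(2) p(2) order_trans by blast
  then have "{z. \<not> z \<le> p} \<in> phi a \<inter> Y" using p(3) spatial_part_XL by (auto simp: mem_phi)
  then have "{z. \<not> z \<le> p} \<in> phi b" using sub by blast
  then show False using p(1) by (simp add: mem_phi)
qed

lemma compact_el_if_compactin_Ytop:
  assumes compact: "compactin Ytop (phi a \<inter> Y)"
  shows "compact_el a"
  unfolding compact_el_def way_below_def
proof (intro allI impI)
  fix S assume "a \<le> Sup S"
  then have "phi a \<inter> Y \<subseteq> phi (Sup S) \<inter> Y" using phi_mono by blast
  then have cover: "phi a \<inter> Y \<subseteq> \<Union>((\<lambda>s. phi s \<inter> Y) ` S)" by (simp only: phi_Sup_inter_Y)
  have opens: "openin Ytop U" if "U \<in> (\<lambda>s. phi s \<inter> Y) ` S" for U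
    using that by (auto simp: openin_Ytop)
  obtain \<F> where \<F>: "finite \<F>" "\<F> \<subseteq> (\<lambda>s. phi s \<inter> Y) ` S" "phi a \<inter> Y \<subseteq> \<Union>\<F>"
    using compactinD[OF compact opens cover] by blast
  obtain T where T: "T \<subseteq> S" "finite T" "\<F> = (\<lambda>s. phi s \<inter> Y) ` T"
    using finite_subset_image[OF \<F>(1,2)] by blast
  have "phi a \<inter> Y \<subseteq> phi (Sup T) \<inter> Y"
    using \<F>(3) unfolding T(3) phi_Sup_inter_Y .
  then show "\<exists>T\<subseteq>S. finite T \<and> a \<le> Sup T" using T(1,2) phi_inter_Y_le_imp_le by blast
qed

lemma compactin_Ytop_if_compact_el:
  assumes compact: "compact_el a"
  shows "compactin Ytop (phi a \<inter> Y)"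
  unfolding compactin_def topspace_Ytop
proof (intro conjI allI impI)
  show "phi a \<inter> Y \<subseteq> Y" by blast
next
  fix \<U> assume \<U>: "(\<forall>U\<in>\<U>. openin Ytop U) \<and> phi a \<inter> Y \<subseteq> \<Union>\<U>"
  then obtain f where f: "\<And>U. U \<in> \<U> \<Longrightarrow> U = phi (f U) \<inter> Y" unfolding openin_Ytop by metis
  then have "a \<le> Sup (f ` \<U>)" using \<U> Union_phi_inter_Y[of \<U> f] phi_inter_Y_le_imp_le by auto
  then obtain T where T: "T \<subseteq> f ` \<U>" "finite T" "a \<le> Sup T"
    using compact unfolding compact_el_def way_below_def by meson
  obtain \<U>' where \<U>': "\<U>' \<subseteq> \<U>" "finite \<U>'" "T = f ` \<U>'"
    using finite_subset_image[OF T(2,1)] by blast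
  have "phi a \<inter> Y \<subseteq> phi (Sup T) \<inter> Y" using phi_mono[OF T(3)] by blast
  also have "\<dots> = \<Union>\<U>'" using Union_phi_inter_Y[of \<U>' f] f \<U>' by auto
  finally show "\<exists>\<F>. finite \<F> \<and> \<F> \<subseteq> \<U> \<and> phi a \<inter> Y \<subseteq> \<Union>\<F>" using \<U>'(1,2) by blast
qed

lemma compactin_Ytop_phi_iff: "compactin Ytop (phi a \<inter> Y) \<longleftrightarrow> compact_el a"
  using compact_el_if_compactin_Ytop compactin_Ytop_if_compact_el by blast

lemma compact_open_Ytop_iff:
  "openin Ytop U \<and> compactin Ytop U \<longleftrightarrow> (\<exists>k. compact_el k \<and> U = phi k \<inter> Y)"
proof
  assume U: "openin Ytop U \<and> compactin Ytop U"
  then obtain k :: 'a where "U = phi k \<inter> Y" by (auto simp: openin_Ytop)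
  then show "\<exists>k. compact_el k \<and> U = phi k \<inter> Y" using U compactin_Ytop_phi_iff by auto
next
  assume "\<exists>k. compact_el k \<and> U = phi k \<inter> Y"
  then show "openin Ytop U \<and> compactin Ytop U" by (auto simp: openin_Ytop compactin_Ytop_phi_iff)
qed

lemma compact_open_base_Ytop:
  assumes "openin Ytop U" "x \<in> U"
  shows "\<exists>V. openin Ytop V \<and> compactin Ytop V \<and> x \<in> V \<and> V \<subseteq> U"
proof -
  obtain a :: 'a where U: "U = phi a \<inter> Y" using assms(1) openin_Ytop by blast
  then have "x \<in> (\<Union>k\<in>{k. compact_el k \<and> k \<le> a}. phi k \<inter> Y)"
    using assms(2) algebraic[of a] phi_Sup_inter_Y by metis
  then obtain k where k: "compact_el k" "k \<le> a" "x \<in> phi k \<inter> Y" by blast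
  then have "openin Ytop (phi k \<inter> Y) \<and> compactin Ytop (phi k \<inter> Y)"
    using compact_open_Ytop_iff by blast
  moreover have "phi k \<inter> Y \<subseteq> U" using U phi_mono[OF k(2)] by blast
  ultimately show ?thesis using k(3) by blast
qed

lemma stably_compactly_based_Ytop_iff:
  "stably_compactly_based Ytop \<longleftrightarrow> (\<forall>k k'::'a. compact_el k \<and> compact_el k' \<longrightarrow> compact_el (inf k k'))"
proof -
  have "(\<forall>U V. openin Ytop U \<and> compactin Ytop U \<and> openin Ytop V \<and> compactin Ytop V
          \<longrightarrow> compactin Ytop (U \<inter> V))
     \<longleftrightarrow> (\<forall>k k'::'a. compact_el k \<and> compact_el k' \<longrightarrow> compact_el (inf k k'))"
  proof (intro iffI allI impI)
    fix k k' :: 'a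
    assume H: "\<forall>U V. openin Ytop U \<and> compactin Ytop U \<and> openin Ytop V \<and> compactin Ytop V
          \<longrightarrow> compactin Ytop (U \<inter> V)"
      and "compact_el k \<and> compact_el k'"
    then have "compactin Ytop ((phi k \<inter> Y) \<inter> (phi k' \<inter> Y))"
      using compact_open_Ytop_iff by blast
    moreover have "(phi k \<inter> Y) \<inter> (phi k' \<inter> Y) = phi (inf k k') \<inter> Y" by (auto simp: phi_inf)
    ultimately show "compact_el (inf k k')" by (simp add: compactin_Ytop_phi_iff)
  next
    fix U V
    assume H: "\<forall>k k'::'a. compact_el k \<and> compact_el k' \<longrightarrow> compact_el (inf k k')"
      and "openin Ytop U \<and> compactin Ytop U \<and> openin Ytop V \<and> compactin Ytop V"
    then obtain k k' :: 'a where "compact_el k" "U = phi k \<inter> Y" "compact_el k'" "V = phi k' \<inter> Y"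
      using compact_open_Ytop_iff by meson
    moreover then have "U \<inter> V = phi (inf k k') \<inter> Y" by (auto simp: phi_inf)
    ultimately show "compactin Ytop (U \<inter> V)" using H by (simp add: compactin_Ytop_phi_iff)
  qed
  moreover have "\<forall>U x. openin Ytop U \<and> x \<in> U \<longrightarrow>
      (\<exists>V. openin Ytop V \<and> compactin Ytop V \<and> x \<in> V \<and> V \<subseteq> U)"
    using compact_open_base_Ytop by blast
  ultimately show ?thesis
    unfolding stably_compactly_based_def using sober_space_Ytop by simp
qed

end

theorem theorem5p4:
  fixes t :: "'a::complete_lattice itself"
  assumes "algebraic_frame t"
  shows "(arithmetic_frame t \<longleftrightarrow> arithmetic_L_space (XL t) (\<subseteq>))
       \<and> (arithmetic_L_space (XL t) (\<subseteq>) \<longleftrightarrow>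
            stably_compactly_based (spatial_topology (XL t) (\<subseteq>)))"
proof -
  interpret algebraic_frame_type t
    using assms unfolding algebraic_frame_def by unfold_locales blast+
  let ?stable = "\<forall>a b c::'a. way_below a b \<and> way_below a c \<longrightarrow> way_below a (inf b c)"
  have "arithmetic_frame t \<longleftrightarrow> ?stable"
    using assms by (simp add: arithmetic_frame_def)
  moreover have "arithmetic_L_space (XL t) (\<subseteq>) \<longleftrightarrow> ?stable"
    unfolding arithmetic_L_space_def using algebraic_L_space_XL ker_sp_Int_iff_stable by blast
  moreover have "stably_compactly_based (spatial_topology (XL t) (\<subseteq>)) \<longleftrightarrow> ?stable"
    using stably_compactly_based_Ytop_iff stable_way_below_iff_compact_inf[OF algebraic] by blast
  ultimately show ?thesis by blast
qed

end
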